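(* Suppose $s\in S$ is an element all of whose monomials have degree $0$ modulo $\vec c$ (i.e.\ degree in $\mathbb{Z}\vec c\subset L$). Then the non-constant terms of $s$ lie in the ideal $(x^{pq-1},x^py,xy^q,y^{pq-1})$.
   Context: Let $p,q\ge2$ be integers. Let $L$ be the abelian group generated by $\vec x,\vec y,\vec c$ modulo $p\vec x+\vec y=\vec x+q\vec y=\vec c$, and let $S=\mathbb{C}[x,y]$ be $L$-graded with $\deg x=\vec x$, $\deg y=\vec y$. *)

theory Defs
  imports Complex_Main "HOL-Library.Poly_Mapping" "HOL-Library.Product_Plus"
begin

text \<open>The polynomial ring S = C[x,y]: finitely supported maps from exponent pairs
  (a,b) (standing for the monomial x^a y^b) to complex coefficients, with the
  convolution product of Poly_Mapping.\<close>
type_synonym S = "(nat \<times> nat) \<Rightarrow>\<^sub>0 complex"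

definition X :: S where "X = Poly_Mapping.single (1, 0) 1"
definition Y :: S where "Y = Poly_Mapping.single (0, 1) 1"

text \<open>The group L = Z x + Z y + Z c modulo the relations p x + y = c, x + q y = c.
  An element u x + v y + w c is represented by (u,v,w) in Z^3; L is Z^3 modulo the
  subgroup generated by (p,1,-1) and (1,q,-1).\<close>
definition L_rel :: "nat \<Rightarrow> nat \<Rightarrow> (int \<times> int \<times> int) set" where
  "L_rel p q = {(m * int p + n, m + n * int q, - m - n) | m n. True}"

definition L_eq :: "nat \<Rightarrow> nat \<Rightarrow> int \<times> int \<times> int \<Rightarrow> int \<times> int \<times> int \<Rightarrow> bool" where
  "L_eq p q u v \<longleftrightarrow> u - v \<in> L_rel p q"

definition mon_deg :: "nat \<times> nat \<Rightarrow> int \<times> int \<times> int" where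
  "mon_deg ab = (int (fst ab), int (snd ab), 0)"

definition in_Zc :: "nat \<Rightarrow> nat \<Rightarrow> int \<times> int \<times> int \<Rightarrow> bool" where
  "in_Zc p q u \<longleftrightarrow> (\<exists>k::int. L_eq p q u (0, 0, k))"

definition in_ideal4 :: "nat \<Rightarrow> nat \<Rightarrow> S \<Rightarrow> bool" where
  "in_ideal4 p q f \<longleftrightarrow> (\<exists>a b c d :: S.
     f = a * X ^ (p * q - 1) + b * (X ^ p * Y) + c * (X * Y ^ q) + d * Y ^ (p * q - 1))"

end

theory Submission
  imports Defs
begin

text \<open>If a x + b y = m (p x + y) + n (x + q y) in L, then
  a q - b = m (p q - 1) and b p - a = n (p q - 1). On the axes this makes the exponent a multiple
  of p q - 1; off the axes, an exponent with a < p and b < q would give 0 < a q - b < p q - 1.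
  So every non-constant monomial of s is divisible by one of the four generators.\<close>

lemma in_Zc_mon_deg_imp_dvd:
  assumes "in_Zc p q (mon_deg (a, b))"
  shows "int p * int q - 1 dvd int a * int q - int b"
    and "int p * int q - 1 dvd int b * int p - int a"
proof -
  from assms obtain m n where "int a = m * int p + n" and "int b = m + n * int q"
    unfolding in_Zc_def L_eq_def L_rel_def mon_deg_def by auto
  then have "int a * int q - int b = m * (int p * int q - 1)"
    and "int b * int p - int a = n * (int p * int q - 1)"
    by (simp_all add: algebra_simps)
  then show "int p * int q - 1 dvd int a * int q - int b"
    and "int p * int q - 1 dvd int b * int p - int a" by simp_all
qed

lemma exponents_outside_staircase:
  fixes a b p q :: nat
  assumes "(a, b) \<noteq> (0, 0)"
    and dvd_a: "int p * int q - 1 dvd int a * int q - int b"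
    and dvd_b: "int p * int q - 1 dvd int b * int p - int a"
  shows "p * q - 1 \<le> a \<or> (p \<le> a \<and> 1 \<le> b) \<or> (1 \<le> a \<and> q \<le> b) \<or> p * q - 1 \<le> b"
proof (cases "p * q = 0")
  case False
  then have P: "int p * int q - 1 = int (p * q - 1)"
    by (simp add: of_nat_diff)
  consider "b = 0" | "a = 0" | "1 \<le> a" "1 \<le> b" "a < p" "b < q"
    | "1 \<le> a" "1 \<le> b" "p \<le> a \<or> q \<le> b"
    using assms(1) by linarith
  then show ?thesis
  proof cases
    case 1
    with dvd_b have "int p * int q - 1 dvd int a" by simp
    moreover have "0 < int a" using 1 assms(1) by simp
    ultimately have "int p * int q - 1 \<le> int a" by (rule zdvd_imp_le)
    then show ?thesis unfolding P by simp
  next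
    case 2
    with dvd_a have "int p * int q - 1 dvd int b" by simp
    moreover have "0 < int b" using 2 assms(1) by simp
    ultimately have "int p * int q - 1 \<le> int b" by (rule zdvd_imp_le)
    then show ?thesis unfolding P by simp
  next
    case 3
    have "1 * int q \<le> int a * int q" "int a * int q \<le> (int p - 1) * int q"
      using 3 by (intro mult_right_mono; simp)+
    then have "0 < int a * int q - int b" and "int a * int q - int b < int p * int q - 1"
      using 3 unfolding left_diff_distrib by linarith+
    with dvd_a show ?thesis using zdvd_imp_le by fastforce
  next
    case 4
    then show ?thesis by auto
  qed
qed auto

lemma single_zero_one: "Poly_Mapping.single ((0::nat), (0::nat)) (1::complex) = 1"
  by (metis single_one zero_prod_def)

lemma X_pow_mult_Y_pow: "X ^ i * Y ^ j = Poly_Mapping.single (i, j) 1"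
proof -
  have "X ^ i = Poly_Mapping.single (i, 0) 1"
    by (induction i) (simp_all add: X_def mult_single plus_prod_def single_zero_one)
  moreover have "Y ^ j = Poly_Mapping.single (0, j) 1"
    by (induction j) (simp_all add: Y_def mult_single plus_prod_def single_zero_one)
  ultimately show ?thesis by (simp add: mult_single plus_prod_def)
qed

lemma single_eq_mult_single:
  fixes i j a b :: nat
  assumes "i \<le> a" and "j \<le> b"
  shows "Poly_Mapping.single (a, b) (c::complex) =
    Poly_Mapping.single (a - i, b - j) c * Poly_Mapping.single (i, j) 1"
  using assms by (simp add: mult_single plus_prod_def)

lemma in_ideal4_zero: "in_ideal4 p q 0"
  unfolding in_ideal4_def by (rule exI[of _ 0])+ simp

lemma in_ideal4_add:
  assumes "in_ideal4 p q f" and "in_ideal4 p q g"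
  shows "in_ideal4 p q (f + g)"
proof -
  from assms obtain a b c d a' b' c' d' where
    "f = a * X ^ (p * q - 1) + b * (X ^ p * Y) + c * (X * Y ^ q) + d * Y ^ (p * q - 1)"
    "g = a' * X ^ (p * q - 1) + b' * (X ^ p * Y) + c' * (X * Y ^ q) + d' * Y ^ (p * q - 1)"
    unfolding in_ideal4_def by blast
  then have "f + g = (a + a') * X ^ (p * q - 1) + (b + b') * (X ^ p * Y)
      + (c + c') * (X * Y ^ q) + (d + d') * Y ^ (p * q - 1)"
    by (simp add: algebra_simps)
  then show ?thesis unfolding in_ideal4_def by blast
qed

lemma in_ideal4_sum:
  assumes "\<And>m. m \<in> A \<Longrightarrow> in_ideal4 p q (f m)"
  shows "in_ideal4 p q (sum f A)"
  using assms
  by (induction A rule: infinite_finite_induct) (simp_all add: in_ideal4_zero in_ideal4_add)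

lemma in_ideal4_mult_left:
  assumes "in_ideal4 p q f"
  shows "in_ideal4 p q (g * f)"
proof -
  from assms obtain a b c d where
    "f = a * X ^ (p * q - 1) + b * (X ^ p * Y) + c * (X * Y ^ q) + d * Y ^ (p * q - 1)"
    unfolding in_ideal4_def by blast
  then have "g * f = (g * a) * X ^ (p * q - 1) + (g * b) * (X ^ p * Y)
      + (g * c) * (X * Y ^ q) + (g * d) * Y ^ (p * q - 1)"
    by (simp add: algebra_simps)
  then show ?thesis unfolding in_ideal4_def by blast
qed

lemma in_ideal4_generators:
  "in_ideal4 p q (X ^ (p * q - 1))" "in_ideal4 p q (X ^ p * Y)"
  "in_ideal4 p q (X * Y ^ q)" "in_ideal4 p q (Y ^ (p * q - 1))"
  unfolding in_ideal4_def by (metis add_0 add.right_neutral mult_1 mult_zero_left)+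

lemma in_ideal4_single_multiple:
  assumes "in_ideal4 p q (X ^ i * Y ^ j)" and "i \<le> a" and "j \<le> b"
  shows "in_ideal4 p q (Poly_Mapping.single (a, b) c)"
  using in_ideal4_mult_left[OF assms(1)]
  by (simp add: X_pow_mult_Y_pow single_eq_mult_single[OF assms(2,3)])

lemma in_ideal4_single:
  assumes "p * q - 1 \<le> a \<or> (p \<le> a \<and> 1 \<le> b) \<or> (1 \<le> a \<and> q \<le> b) \<or> p * q - 1 \<le> b"
  shows "in_ideal4 p q (Poly_Mapping.single (a, b) c)"
  using assms
proof (elim disjE conjE)
  assume "p * q - 1 \<le> a"
  with in_ideal4_generators(1) show ?thesis
    by (intro in_ideal4_single_multiple[of _ _ _ 0]) simp_all
next
  assume "p \<le> a" "1 \<le> b"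
  with in_ideal4_generators(2) show ?thesis
    by (intro in_ideal4_single_multiple[of _ _ _ 1]) simp_all
next
  assume "1 \<le> a" "q \<le> b"
  with in_ideal4_generators(3) show ?thesis
    by (intro in_ideal4_single_multiple[of _ _ 1]) simp_all
next
  assume "p * q - 1 \<le> b"
  with in_ideal4_generators(4) show ?thesis
    by (intro in_ideal4_single_multiple[of _ _ 0]) simp_all
qed

lemma poly_mapping_sum_single:
  "f = (\<Sum>m\<in>Poly_Mapping.keys f. Poly_Mapping.single m (Poly_Mapping.lookup f m))"
  by (rule poly_mapping_eqI) (auto simp: lookup_sum lookup_single when_def in_keys_iff sum.If_cases)

theorem lemma2p3:
  fixes p q :: nat and s :: S
  assumes "p \<ge> 2" and "q \<ge> 2"
    and "\<forall>m \<in> Poly_Mapping.keys s. in_Zc p q (mon_deg m)"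
  shows "in_ideal4 p q (s - Poly_Mapping.single (0, 0) (Poly_Mapping.lookup s (0, 0)))"
proof -
  define t where "t = s - Poly_Mapping.single (0, 0) (Poly_Mapping.lookup s (0, 0))"
  have keys_t: "Poly_Mapping.keys t = Poly_Mapping.keys s - {(0, 0)}"
    unfolding t_def by (auto simp: in_keys_iff lookup_minus lookup_single when_def split: if_splits)
  have "in_ideal4 p q (Poly_Mapping.single m c)" if "m \<in> Poly_Mapping.keys t" for m c
  proof -
    obtain a b where m: "m = (a, b)" by fastforce
    with that keys_t assms(3) have "(a, b) \<noteq> (0, 0)" and "in_Zc p q (mon_deg (a, b))"
      by auto
    then show ?thesis
      unfolding m by (intro in_ideal4_single exponents_outside_staircase in_Zc_mon_deg_imp_dvd)
  qed
  then have "in_ideal4 p q t"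
    by (subst poly_mapping_sum_single) (rule in_ideal4_sum)
  then show ?thesis unfolding t_def .
qed

end
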